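(* Let $\theta(q,x):=\sum_{j=0}^{\infty}q^{j(j+1)/2}x^j$ and $w:=3/\sqrt{2}$. For all $(q,t)\in[0.6,0.75]\times[1,w]$, one has $\theta(q,-t+wi)\neq 0$. *)

theory Defs
  imports "HOL-Analysis.Analysis"
begin

definition ptheta :: "real \<Rightarrow> complex \<Rightarrow> complex" where
  "ptheta q x = (\<Sum>j. complex_of_real (q ^ (j * (j + 1) div 2)) * x ^ j)"

end

theory Submission
  imports Defs
begin

text \<open>Split \<open>\<theta>(q, x)\<close> into its partial sum \<open>P\<close> of degree \<open>\<le> 9\<close> and the tail. On the
  segment \<open>x = -t + wi\<close>, \<open>1 \<le> t \<le> w\<close>, we have \<open>|x| \<le> 3\<close>, and for \<open>q \<le> 3/4\<close> comparison with a
  geometric series bounds the tail by \<open>0.0091\<close>. It therefore suffices that at each point of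
  \<open>[0.6, 0.75] \<times> [1, w]\<close> the real or the imaginary part of \<open>P\<close> exceeds \<open>0.01\<close>. The box is cut
  into finitely many sub-boxes, and on each of them this follows from a second-order Taylor
  expansion of \<open>Re P\<close> or \<open>Im P\<close> in \<open>(q, t)\<close> around the centre. The value and the first
  derivatives at the centre and bounds for the second derivatives on the sub-box are enclosed by
  fixed-point interval arithmetic, and the resulting finite computation is checked by
  \<open>code_simp\<close>.\<close>

section \<open>Truncated partial theta sums and their derivatives\<close>

definition tri :: "nat \<Rightarrow> nat" where
  "tri j = j * (j + 1) div 2"

lemma tri_Suc: "tri (Suc j) = tri j + Suc j"
  unfolding tri_def by (induction j) auto

text \<open>Differentiating these weighted sums in \<open>q\<close> or in \<open>x\<close> gives sums of the same form with
  weights \<open>weight_dq\<close> and \<open>weight_dx\<close>, so all Taylor coefficients below are of this form.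
  Truncated subtraction in the exponents only affects terms whose weight vanishes.\<close>

definition theta_trunc :: "nat \<Rightarrow> (nat \<Rightarrow> nat) \<Rightarrow> nat \<Rightarrow> nat \<Rightarrow> real \<Rightarrow> complex \<Rightarrow> complex" where
  "theta_trunc n w e d q x = (\<Sum>j\<le>n. of_nat (w j) * of_real (q ^ (tri j - d)) * x ^ (j - e))"

definition weight_dq :: "(nat \<Rightarrow> nat) \<Rightarrow> nat \<Rightarrow> nat \<Rightarrow> nat" where
  "weight_dq w d j = w j * (tri j - d)"

definition weight_dx :: "(nat \<Rightarrow> nat) \<Rightarrow> nat \<Rightarrow> nat \<Rightarrow> nat" where
  "weight_dx w e j = w j * (j - e)"

lemma theta_trunc_shift:
  assumes "\<And>j. tri j < d \<Longrightarrow> w j = 0"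
  shows "of_real (q ^ d) * theta_trunc n w e d q x = theta_trunc n w e 0 q x"
  unfolding theta_trunc_def sum_distrib_left
proof (rule sum.cong)
  fix j
  show "of_real (q ^ d) * (of_nat (w j) * of_real (q ^ (tri j - d)) * x ^ (j - e)) =
        of_nat (w j) * of_real (q ^ (tri j - 0)) * x ^ (j - e)"
  proof (cases "tri j < d")
    case False
    then have "(of_real (q ^ d) :: complex) * of_real (q ^ (tri j - d)) = of_real (q ^ (tri j - 0))"
      by (simp flip: power_add)
    moreover have "of_real (q ^ d) * (of_nat (w j) * of_real (q ^ (tri j - d)) * x ^ (j - e)) =
        of_nat (w j) * ((of_real (q ^ d) :: complex) * of_real (q ^ (tri j - d))) * x ^ (j - e)"
      by (simp only: ac_simps)
    ultimately show ?thesis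
      by (simp only:)
  qed (simp add: assms)
qed simp

lemma has_vector_derivative_theta_trunc_q:
  "((\<lambda>q. theta_trunc n w e d q x) has_vector_derivative theta_trunc n (weight_dq w d) e (Suc d) q x) (at q)"
proof -
  have "((\<lambda>q. of_nat (w j) * of_real (q ^ (tri j - d)) * x ^ (j - e)) has_vector_derivative
          of_nat (weight_dq w d j) * of_real (q ^ (tri j - Suc d)) * x ^ (j - e)) (at q)" for j
  proof -
    have "((\<lambda>q. of_nat (w j) * of_real (q ^ (tri j - d)) * x ^ (j - e)) has_vector_derivative
            of_nat (w j) * of_real (real (tri j - d) * q ^ (tri j - d - Suc 0)) * x ^ (j - e)) (at q)"
      by (intro has_vector_derivative_mult_left has_vector_derivative_mult_right
          has_vector_derivative_of_real DERIV_pow)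
    moreover have "(of_nat (w j) * of_real (real (tri j - d) * q ^ (tri j - d - Suc 0)) :: complex) =
        of_nat (weight_dq w d j) * of_real (q ^ (tri j - Suc d))"
      by (simp add: weight_dq_def)
    ultimately show ?thesis
      by (simp only:)
  qed
  then show ?thesis
    unfolding theta_trunc_def by (intro has_vector_derivative_sum)
qed

lemma has_field_derivative_theta_trunc_x:
  "((\<lambda>x. theta_trunc n w e d q x) has_field_derivative theta_trunc n (weight_dx w e) (Suc e) d q x) (at x)"
proof -
  have "((\<lambda>x. of_nat (w j) * of_real (q ^ (tri j - d)) * x ^ (j - e)) has_field_derivative
          of_nat (weight_dx w e j) * of_real (q ^ (tri j - d)) * x ^ (j - Suc e)) (at x)" for j
  proof -
    have "((\<lambda>x. of_nat (w j) * of_real (q ^ (tri j - d)) * x ^ (j - e)) has_field_derivative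
            of_nat (w j) * of_real (q ^ (tri j - d)) * (of_nat (j - e) * (1 * x ^ (j - e - Suc 0)))) (at x)"
      by (intro DERIV_cmult DERIV_power DERIV_ident)
    moreover have "(of_nat (w j) * of_real (q ^ (tri j - d)) * (of_nat (j - e) * (1 * x ^ (j - e - Suc 0)))) =
        of_nat (weight_dx w e j) * of_real (q ^ (tri j - d)) * (x ^ (j - Suc e) :: complex)"
      by (simp add: weight_dx_def)
    ultimately show ?thesis
      by (simp only:)
  qed
  then show ?thesis
    unfolding theta_trunc_def by (intro DERIV_sum)
qed

lemma has_vector_derivative_theta_trunc_t:
  "((\<lambda>t. theta_trunc n w e d q (Complex (- t) c)) has_vector_derivative
      - theta_trunc n (weight_dx w e) (Suc e) d q (Complex (- t) c)) (at t)"
proof -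
  have line: "Complex (- s) c = Complex 0 c - of_real s" for s
    by (simp add: complex_eq_iff)
  have "((\<lambda>z. theta_trunc n w e d q (Complex 0 c - z)) has_field_derivative
          theta_trunc n (weight_dx w e) (Suc e) d q (Complex 0 c - of_real t) * (- 1)) (at (of_real t))"
    by (intro DERIV_chain2[OF has_field_derivative_theta_trunc_x] derivative_eq_intros) auto
  from has_vector_derivative_real_field[OF this] show ?thesis
    unfolding line by simp
qed

definition cpart :: "bool \<Rightarrow> complex \<Rightarrow> real" where
  "cpart b z = (if b then Re z else Im z)"

lemma cpart_minus [simp]: "cpart b (- z) = - cpart b z"
  by (simp add: cpart_def)

lemma cpart_diff: "cpart b (z - u) = cpart b z - cpart b u"
  by (simp add: cpart_def)

lemma cpart_of_real_mult [simp]: "cpart b (of_real r * z) = r * cpart b z"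
  by (simp add: cpart_def)

lemma abs_cpart_le: "\<bar>cpart b z\<bar> \<le> cmod z"
  by (simp add: cpart_def abs_Re_le_cmod abs_Im_le_cmod)

lemma has_real_derivative_cpart:
  "(f has_vector_derivative D) F \<Longrightarrow> ((\<lambda>x. cpart b (f x)) has_real_derivative cpart b D) F"
  by (cases b) (simp_all add: cpart_def has_field_derivative_Re has_field_derivative_Im)

definition theta_part :: "bool \<Rightarrow> (nat \<Rightarrow> nat) \<Rightarrow> nat \<Rightarrow> nat \<Rightarrow> real \<Rightarrow> real \<Rightarrow> real" where
  "theta_part b w e d q t = cpart b (theta_trunc 9 w e d q (Complex (- t) (3 / sqrt 2)))"

lemma has_real_derivative_theta_part_q:
  "((\<lambda>q. theta_part b w e d q t) has_real_derivative theta_part b (weight_dq w d) e (Suc d) q t) (at q)"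
  unfolding theta_part_def by (intro has_real_derivative_cpart has_vector_derivative_theta_trunc_q)

lemma has_real_derivative_theta_part_t:
  "((\<lambda>t. theta_part b w e d q t) has_real_derivative - theta_part b (weight_dx w e) (Suc e) d q t) (at t)"
  using has_real_derivative_cpart[OF has_vector_derivative_theta_trunc_t]
  unfolding theta_part_def by simp

section \<open>Second-order Taylor bounds on a box\<close>

lemma Taylor_remainder_abs_le:
  fixes f :: "real \<Rightarrow> real"
  assumes "0 < n" "diff 0 = f"
    and "\<And>m t. m < n \<Longrightarrow> a \<le> t \<Longrightarrow> t \<le> b \<Longrightarrow> (diff m has_real_derivative diff (Suc m) t) (at t)"
    and bound: "\<And>t. a \<le> t \<Longrightarrow> t \<le> b \<Longrightarrow> \<bar>diff n t\<bar> \<le> M"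
    and "a \<le> c" "c \<le> b" "a \<le> x" "x \<le> b"
  shows "\<bar>f x - (\<Sum>m<n. diff m c / fact m * (x - c) ^ m)\<bar> \<le> M / fact n * \<bar>x - c\<bar> ^ n"
proof (cases "x = c")
  case True
  then show ?thesis
    using Maclaurin_zero[of 0 n "\<lambda>m _. diff m c"] assms(1,2) by (simp add: power_0_left)
next
  case False
  then obtain t where t: "a \<le> t" "t \<le> b"
    and taylor: "f x = (\<Sum>m<n. diff m c / fact m * (x - c) ^ m) + diff n t / fact n * (x - c) ^ n"
    using Taylor[of n diff f a b c x] assms by (smt (verit))
  have "\<bar>diff n t / fact n * (x - c) ^ n\<bar> = \<bar>diff n t\<bar> / fact n * \<bar>x - c\<bar> ^ n"
    by (simp add: abs_mult power_abs)
  also have "\<dots> \<le> M / fact n * \<bar>x - c\<bar> ^ n"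
    using bound[OF t] by (intro mult_right_mono divide_right_mono) auto
  finally show ?thesis
    using taylor by simp
qed

lemma Taylor1_abs_le:
  fixes g g' :: "real \<Rightarrow> real"
  assumes "\<And>s. a \<le> s \<Longrightarrow> s \<le> b \<Longrightarrow> (g has_real_derivative g' s) (at s)"
    and "\<And>s. a \<le> s \<Longrightarrow> s \<le> b \<Longrightarrow> \<bar>g' s\<bar> \<le> M"
    and "a \<le> c" "c \<le> b" "a \<le> x" "x \<le> b"
  shows "\<bar>g x - g c\<bar> \<le> M * \<bar>x - c\<bar>"
  using Taylor_remainder_abs_le[of 1 "\<lambda>m. [g, g'] ! m" g a b M c x] assms by simp

lemma Taylor2_abs_le:
  fixes g g' g'' :: "real \<Rightarrow> real"
  assumes "\<And>s. a \<le> s \<Longrightarrow> s \<le> b \<Longrightarrow> (g has_real_derivative g' s) (at s)"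
    and "\<And>s. a \<le> s \<Longrightarrow> s \<le> b \<Longrightarrow> (g' has_real_derivative g'' s) (at s)"
    and "\<And>s. a \<le> s \<Longrightarrow> s \<le> b \<Longrightarrow> \<bar>g'' s\<bar> \<le> M"
    and "a \<le> c" "c \<le> b" "a \<le> x" "x \<le> b"
  shows "\<bar>g x - g c - g' c * (x - c)\<bar> \<le> M / 2 * (x - c)\<^sup>2"
proof -
  have "\<bar>g x - (\<Sum>m<2. ([g, g', g''] ! m) c / fact m * (x - c) ^ m)\<bar> \<le> M / fact 2 * \<bar>x - c\<bar> ^ 2"
  proof (rule Taylor_remainder_abs_le)
    show "([g, g', g''] ! m has_real_derivative ([g, g', g''] ! Suc m) t) (at t)"
      if "m < 2" "a \<le> t" "t \<le> b" for m t
      using that assms(1,2) by (auto simp: less_2_cases_iff)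
  qed (use assms in auto)
  then show ?thesis
    by (simp add: numeral_2_eq_2 diff_diff_eq)
qed

lemma taylor_box_lower_bound:
  fixes f fq ft fqq fqt ftt :: "real \<Rightarrow> real \<Rightarrow> real"
  assumes box: "q \<in> {qa..qb}" "qc \<in> {qa..qb}" "t \<in> {ta..tb}" "tc \<in> {ta..tb}"
    and f_q: "\<And>x y. x \<in> {qa..qb} \<Longrightarrow> y \<in> {ta..tb} \<Longrightarrow> ((\<lambda>x. f x y) has_real_derivative fq x y) (at x)"
    and fq_q: "\<And>x y. x \<in> {qa..qb} \<Longrightarrow> y \<in> {ta..tb} \<Longrightarrow> ((\<lambda>x. fq x y) has_real_derivative fqq x y) (at x)"
    and f_t: "\<And>x y. x \<in> {qa..qb} \<Longrightarrow> y \<in> {ta..tb} \<Longrightarrow> ((\<lambda>y. f x y) has_real_derivative ft x y) (at y)"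
    and ft_t: "\<And>x y. x \<in> {qa..qb} \<Longrightarrow> y \<in> {ta..tb} \<Longrightarrow> ((\<lambda>y. ft x y) has_real_derivative ftt x y) (at y)"
    and fq_t: "\<And>x y. x \<in> {qa..qb} \<Longrightarrow> y \<in> {ta..tb} \<Longrightarrow> ((\<lambda>y. fq x y) has_real_derivative fqt x y) (at y)"
    and Mqq: "\<And>x y. x \<in> {qa..qb} \<Longrightarrow> y \<in> {ta..tb} \<Longrightarrow> \<bar>fqq x y\<bar> \<le> Mqq"
    and Mqt: "\<And>x y. x \<in> {qa..qb} \<Longrightarrow> y \<in> {ta..tb} \<Longrightarrow> \<bar>fqt x y\<bar> \<le> Mqt"
    and Mtt: "\<And>x y. x \<in> {qa..qb} \<Longrightarrow> y \<in> {ta..tb} \<Longrightarrow> \<bar>ftt x y\<bar> \<le> Mtt"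
    and G: "\<bar>fq qc tc\<bar> \<le> G" and H: "\<bar>ft qc tc\<bar> \<le> H"
    and R: "\<bar>q - qc\<bar> \<le> R" and S: "\<bar>t - tc\<bar> \<le> S"
  shows "f qc tc - G * R - H * S - Mqt * R * S - Mqq / 2 * R\<^sup>2 - Mtt / 2 * S\<^sup>2 \<le> f q t"
proof -
  have in_q: "\<bar>f q t - f qc t - fq qc t * (q - qc)\<bar> \<le> Mqq / 2 * (q - qc)\<^sup>2"
    using box by (intro Taylor2_abs_le[of qa qb]) (auto intro: f_q fq_q Mqq)
  have in_t: "\<bar>f qc t - f qc tc - ft qc tc * (t - tc)\<bar> \<le> Mtt / 2 * (t - tc)\<^sup>2"
    using box by (intro Taylor2_abs_le[of ta tb]) (auto intro: f_t ft_t Mtt)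
  have mixed: "\<bar>fq qc t - fq qc tc\<bar> \<le> Mqt * \<bar>t - tc\<bar>"
    using box by (intro Taylor1_abs_le[of ta tb]) (auto intro: fq_t Mqt)
  have "0 \<le> Mqq" "0 \<le> Mqt" "0 \<le> Mtt"
    using Mqq Mqt Mtt box by (meson abs_ge_zero order_trans)+
  have "(q - qc)\<^sup>2 \<le> R\<^sup>2" "(t - tc)\<^sup>2 \<le> S\<^sup>2"
    using R S power_mono[of "\<bar>q - qc\<bar>" R 2] power_mono[of "\<bar>t - tc\<bar>" S 2] by simp_all
  then have sq: "Mqq / 2 * (q - qc)\<^sup>2 \<le> Mqq / 2 * R\<^sup>2" "Mtt / 2 * (t - tc)\<^sup>2 \<le> Mtt / 2 * S\<^sup>2"
    using \<open>0 \<le> Mqq\<close> \<open>0 \<le> Mtt\<close> by (simp_all add: mult_left_mono)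
  have "\<bar>fq qc t\<bar> \<le> G + Mqt * S"
    using G mixed S mult_left_mono[of "\<bar>t - tc\<bar>" S Mqt] \<open>0 \<le> Mqt\<close> by linarith
  then have "\<bar>fq qc t * (q - qc)\<bar> \<le> (G + Mqt * S) * R"
    unfolding abs_mult using R by (intro mult_mono) auto
  then have lin_q: "- (G * R + Mqt * R * S) \<le> fq qc t * (q - qc)"
    by (simp add: abs_le_iff algebra_simps)
  have "\<bar>ft qc tc * (t - tc)\<bar> \<le> H * S"
    unfolding abs_mult using H S by (intro mult_mono) auto
  then have lin_t: "- (H * S) \<le> ft qc tc * (t - tc)"
    by (simp add: abs_le_iff)
  show ?thesis
    using in_q in_t sq lin_q lin_t unfolding abs_le_iff by linarith
qed

lemma theta_part_taylor_lower_bound: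
  assumes box: "q \<in> {qa..qb}" "qc \<in> {qa..qb}" "t \<in> {ta..tb}" "tc \<in> {ta..tb}"
    and G: "\<bar>theta_part b (weight_dq (\<lambda>_. 1) 0) 0 1 qc tc\<bar> \<le> G"
    and H: "\<bar>theta_part b (weight_dx (\<lambda>_. 1) 0) 1 0 qc tc\<bar> \<le> H"
    and Mqq: "\<And>x y. x \<in> {qa..qb} \<Longrightarrow> y \<in> {ta..tb} \<Longrightarrow>
      \<bar>theta_part b (weight_dq (weight_dq (\<lambda>_. 1) 0) 1) 0 2 x y\<bar> \<le> Mqq"
    and Mqt: "\<And>x y. x \<in> {qa..qb} \<Longrightarrow> y \<in> {ta..tb} \<Longrightarrow>
      \<bar>theta_part b (weight_dx (weight_dq (\<lambda>_. 1) 0) 0) 1 1 x y\<bar> \<le> Mqt"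
    and Mtt: "\<And>x y. x \<in> {qa..qb} \<Longrightarrow> y \<in> {ta..tb} \<Longrightarrow>
      \<bar>theta_part b (weight_dx (weight_dx (\<lambda>_. 1) 0) 1) 2 0 x y\<bar> \<le> Mtt"
    and R: "\<bar>q - qc\<bar> \<le> R" and S: "\<bar>t - tc\<bar> \<le> S"
  shows "theta_part b (\<lambda>_. 1) 0 0 qc tc - G * R - H * S - Mqt * R * S - Mqq / 2 * R\<^sup>2 - Mtt / 2 * S\<^sup>2
    \<le> theta_part b (\<lambda>_. 1) 0 0 q t"
proof (rule taylor_box_lower_bound[where f = "theta_part b (\<lambda>_. 1) 0 0"
      and fq = "theta_part b (weight_dq (\<lambda>_. 1) 0) 0 1"
      and fqq = "theta_part b (weight_dq (weight_dq (\<lambda>_. 1) 0) 1) 0 2"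
      and ft = "\<lambda>x y. - theta_part b (weight_dx (\<lambda>_. 1) 0) 1 0 x y"
      and ftt = "theta_part b (weight_dx (weight_dx (\<lambda>_. 1) 0) 1) 2 0"
      and fqt = "\<lambda>x y. - theta_part b (weight_dx (weight_dq (\<lambda>_. 1) 0) 0) 1 1 x y"])
  note dq0 = has_real_derivative_theta_part_q[where d = 0, unfolded One_nat_def[symmetric]]
    and dq1 = has_real_derivative_theta_part_q[where d = 1, unfolded Suc_1]
    and dt0 = has_real_derivative_theta_part_t[where e = 0, unfolded One_nat_def[symmetric]]
    and dt1 = has_real_derivative_theta_part_t[where e = 1, unfolded Suc_1]
  fix x y
  show "((\<lambda>x. theta_part b (\<lambda>_. 1) 0 0 x y) has_real_derivative
      theta_part b (weight_dq (\<lambda>_. 1) 0) 0 1 x y) (at x)"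
    by (rule dq0)
  show "((\<lambda>x. theta_part b (weight_dq (\<lambda>_. 1) 0) 0 1 x y) has_real_derivative
      theta_part b (weight_dq (weight_dq (\<lambda>_. 1) 0) 1) 0 2 x y) (at x)"
    by (rule dq1)
  show "((\<lambda>y. theta_part b (\<lambda>_. 1) 0 0 x y) has_real_derivative
      - theta_part b (weight_dx (\<lambda>_. 1) 0) 1 0 x y) (at y)"
    by (rule dt0)
  show "((\<lambda>y. - theta_part b (weight_dx (\<lambda>_. 1) 0) 1 0 x y) has_real_derivative
      theta_part b (weight_dx (weight_dx (\<lambda>_. 1) 0) 1) 2 0 x y) (at y)"
    using DERIV_minus[OF dt1] by simp
  show "((\<lambda>y. theta_part b (weight_dq (\<lambda>_. 1) 0) 0 1 x y) has_real_derivative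
      - theta_part b (weight_dx (weight_dq (\<lambda>_. 1) 0) 0) 1 1 x y) (at y)"
    by (rule dt0)
qed (use assms in auto)

section \<open>Fixed-point interval arithmetic\<close>

type_synonym fx_ivl = "int \<times> int"
type_synonym fx_cbox = "fx_ivl \<times> fx_ivl"

definition fx_real :: "int \<Rightarrow> real" where
  "fx_real k = of_int k / 16384"

definition fx_in :: "real \<Rightarrow> fx_ivl \<Rightarrow> bool" where
  "fx_in x X \<longleftrightarrow> fx_real (fst X) \<le> x \<and> x \<le> fx_real (snd X)"

definition fx_cin :: "complex \<Rightarrow> fx_cbox \<Rightarrow> bool" where
  "fx_cin z Z \<longleftrightarrow> fx_in (Re z) (fst Z) \<and> fx_in (Im z) (snd Z)"

definition fx_down :: "int \<Rightarrow> int" where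
  "fx_down p = p div 16384"

definition fx_up :: "int \<Rightarrow> int" where
  "fx_up p = - (- p div 16384)"

definition fx_add :: "fx_ivl \<Rightarrow> fx_ivl \<Rightarrow> fx_ivl" where
  "fx_add X Y = (fst X + fst Y, snd X + snd Y)"

definition fx_neg :: "fx_ivl \<Rightarrow> fx_ivl" where
  "fx_neg X = (- snd X, - fst X)"

definition fx_hull :: "fx_ivl \<Rightarrow> fx_ivl \<Rightarrow> fx_ivl" where
  "fx_hull X Y = (min (fst X) (fst Y), max (snd X) (snd Y))"

definition fx_mul_nonneg :: "fx_ivl \<Rightarrow> fx_ivl \<Rightarrow> fx_ivl" where
  "fx_mul_nonneg X Y =
    (fx_down (if 0 \<le> fst X then fst X * fst Y else fst X * snd Y),
     fx_up (if 0 \<le> snd X then snd X * snd Y else snd X * fst Y))"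

text \<open>Dispatching on signs needs two integer products in the common cases instead of four,
  which makes the certificate check below markedly faster.\<close>

definition fx_mul :: "fx_ivl \<Rightarrow> fx_ivl \<Rightarrow> fx_ivl" where
  "fx_mul X Y =
    (if 0 \<le> fst Y then fx_mul_nonneg X Y
     else if 0 \<le> fst X then fx_mul_nonneg Y X
     else if snd Y \<le> 0 then fx_neg (fx_mul_nonneg X (fx_neg Y))
     else fx_hull (fx_neg (fx_mul_nonneg X (0, - fst Y))) (fx_mul_nonneg X (0, snd Y)))"

definition fx_cadd :: "fx_cbox \<Rightarrow> fx_cbox \<Rightarrow> fx_cbox" where
  "fx_cadd Z U = (fx_add (fst Z) (fst U), fx_add (snd Z) (snd U))"

definition fx_cmul :: "fx_cbox \<Rightarrow> fx_cbox \<Rightarrow> fx_cbox" where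
  "fx_cmul Z U =
    (fx_add (fx_mul (fst Z) (fst U)) (fx_neg (fx_mul (snd Z) (snd U))),
     fx_add (fx_mul (fst Z) (snd U)) (fx_mul (snd Z) (fst U)))"

definition fx_cscale :: "fx_ivl \<Rightarrow> fx_cbox \<Rightarrow> fx_cbox" where
  "fx_cscale R Z = (fx_mul R (fst Z), fx_mul R (snd Z))"

definition fx_cscale_int :: "int \<Rightarrow> fx_cbox \<Rightarrow> fx_cbox" where
  "fx_cscale_int k Z = ((k * fst (fst Z), k * snd (fst Z)), (k * fst (snd Z), k * snd (snd Z)))"

lemma fx_real_down_mult_le: "fx_real (fx_down (a * b)) \<le> fx_real a * fx_real b"
proof -
  have "real_of_int (a * b div 16384) = of_int \<lfloor>real_of_int (a * b) / real_of_int 16384\<rfloor>"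
    by (simp only: floor_divide_of_int_eq)
  also have "\<dots> \<le> real_of_int (a * b) / real_of_int 16384"
    by (rule of_int_floor_le)
  finally show ?thesis
    by (simp add: fx_real_def fx_down_def field_simps)
qed

lemma fx_real_up_mult_ge: "fx_real a * fx_real b \<le> fx_real (fx_up (a * b))"
  using fx_real_down_mult_le[of "- a" b] by (simp add: fx_real_def fx_up_def fx_down_def)

lemma fx_in_point: "fx_in (fx_real a) (a, a)"
  by (simp add: fx_in_def)

lemma fx_in_add: "fx_in x X \<Longrightarrow> fx_in y Y \<Longrightarrow> fx_in (x + y) (fx_add X Y)"
  by (simp add: fx_in_def fx_add_def fx_real_def add_divide_distrib)

lemma fx_in_neg: "fx_in x X \<Longrightarrow> fx_in (- x) (fx_neg X)"
  by (auto simp: fx_in_def fx_neg_def fx_real_def)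

lemma fx_in_hull: "fx_in x X \<or> fx_in x Y \<Longrightarrow> fx_in x (fx_hull X Y)"
  by (auto simp: fx_in_def fx_hull_def fx_real_def min_def max_def)

lemma mult_bounds_nonneg_right:
  fixes a b c d x y :: real
  assumes "a \<le> x" "x \<le> b" "c \<le> y" "y \<le> d" "0 \<le> c"
  shows "(if 0 \<le> a then a * c else a * d) \<le> x * y" "x * y \<le> (if 0 \<le> b then b * d else b * c)"
  using assms
  by (auto intro: order_trans[OF mult_right_mono mult_left_mono] order_trans[OF mult_left_mono_neg mult_right_mono]
      order_trans[OF mult_right_mono mult_left_mono_neg])

lemma fx_in_mul_nonneg:
  assumes "fx_in x X" "fx_in y Y" "0 \<le> fst Y"
  shows "fx_in (x * y) (fx_mul_nonneg X Y)"
proof -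
  obtain a b c d where XY: "X = (a, b)" "Y = (c, d)"
    by fastforce
  have "fx_real a \<le> x" "x \<le> fx_real b" "fx_real c \<le> y" "y \<le> fx_real d" "0 \<le> fx_real c"
    using assms by (auto simp: XY fx_in_def fx_real_def)
  note bounds = mult_bounds_nonneg_right[OF this]
  have sign: "0 \<le> fx_real k \<longleftrightarrow> 0 \<le> k" for k
    by (simp add: fx_real_def)
  have "fx_real (fx_down (if 0 \<le> a then a * c else a * d)) \<le>
      (if 0 \<le> fx_real a then fx_real a * fx_real c else fx_real a * fx_real d)"
    by (simp add: sign fx_real_down_mult_le)
  moreover have "(if 0 \<le> fx_real b then fx_real b * fx_real d else fx_real b * fx_real c) \<le>
      fx_real (fx_up (if 0 \<le> b then b * d else b * c))"
    by (simp add: sign fx_real_up_mult_ge)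
  ultimately show ?thesis
    using bounds by (auto simp: XY fx_in_def fx_mul_nonneg_def)
qed

lemma fx_in_mul:
  assumes x: "fx_in x X" and y: "fx_in y Y"
  shows "fx_in (x * y) (fx_mul X Y)"
proof -
  have neg_y: "fx_in (- y) (0, - fst Y)" if "y \<le> 0"
    using y that by (auto simp: fx_in_def fx_real_def)
  have pos_y: "fx_in y (0, snd Y)" if "0 \<le> y"
    using y that by (auto simp: fx_in_def fx_real_def)
  consider "0 \<le> fst Y" | "\<not> 0 \<le> fst Y" "0 \<le> fst X" | "\<not> 0 \<le> fst Y" "\<not> 0 \<le> fst X" "snd Y \<le> 0"
    | "\<not> 0 \<le> fst Y" "\<not> 0 \<le> fst X" "\<not> snd Y \<le> 0"
    by blast
  then show ?thesis
  proof cases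
    case 1
    then show ?thesis
      using fx_in_mul_nonneg[OF x y] by (simp add: fx_mul_def)
  next
    case 2
    then show ?thesis
      using fx_in_mul_nonneg[OF y x] by (simp add: fx_mul_def mult.commute)
  next
    case 3
    have "fx_in (- (x * - y)) (fx_neg (fx_mul_nonneg X (fx_neg Y)))"
      using 3 by (intro fx_in_neg fx_in_mul_nonneg x fx_in_neg y) (simp add: fx_neg_def)
    then show ?thesis
      using 3 by (simp add: fx_mul_def)
  next
    case 4
    have "fx_in (x * y) (fx_neg (fx_mul_nonneg X (0, - fst Y))) \<or> fx_in (x * y) (fx_mul_nonneg X (0, snd Y))"
    proof (cases "y \<le> 0")
      case True
      then show ?thesis
        using fx_in_neg[OF fx_in_mul_nonneg[OF x neg_y]] by simp
    next
      case False
      then show ?thesis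
        using fx_in_mul_nonneg[OF x pos_y] by simp
    qed
    then show ?thesis
      using 4 by (simp add: fx_mul_def fx_in_hull)
  qed
qed

lemma fx_cin_add: "fx_cin z Z \<Longrightarrow> fx_cin u U \<Longrightarrow> fx_cin (z + u) (fx_cadd Z U)"
  by (simp add: fx_cin_def fx_cadd_def fx_in_add)

lemma fx_cin_mul:
  assumes "fx_cin z Z" "fx_cin u U"
  shows "fx_cin (z * u) (fx_cmul Z U)"
proof -
  have "fx_in (Re z * Re u + - (Im z * Im u)) (fst (fx_cmul Z U))"
    "fx_in (Re z * Im u + Im z * Re u) (snd (fx_cmul Z U))"
    using assms unfolding fx_cin_def fx_cmul_def prod.sel
    by (intro fx_in_add fx_in_mul fx_in_neg; simp)+
  then show ?thesis
    by (simp add: fx_cin_def)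
qed

lemma fx_cin_scale: "fx_in r R \<Longrightarrow> fx_cin z Z \<Longrightarrow> fx_cin (of_real r * z) (fx_cscale R Z)"
  by (simp add: fx_cin_def fx_cscale_def fx_in_mul)

lemma fx_cin_scale_int:
  assumes "fx_cin z Z"
  shows "fx_cin (of_nat n * z) (fx_cscale_int (int n) Z)"
proof -
  have "fx_in (of_nat n * x) (int n * fst X, int n * snd X)" if "fx_in x X" for x X
    using that by (auto simp: fx_in_def fx_real_def mult_left_mono simp flip: times_divide_eq_right)
  then show ?thesis
    using assms by (simp add: fx_cin_def fx_cscale_int_def)
qed

section \<open>Enclosing the truncated sums\<close>

definition theta_monomial :: "real \<Rightarrow> complex \<Rightarrow> nat \<Rightarrow> nat \<Rightarrow> complex" where
  "theta_monomial q x j e = of_real (q ^ tri j) * x ^ (j - e)"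

lemma theta_monomial_Suc_Suc: "theta_monomial q x (Suc j) (Suc e) = of_real (q ^ Suc j) * theta_monomial q x j e"
  by (simp add: theta_monomial_def tri_Suc power_add)

lemma theta_monomial_Suc_0: "theta_monomial q x (Suc j) 0 = theta_monomial q x (Suc j) 1 * x"
  by (simp add: theta_monomial_def)

lemma theta_trunc_Suc_monomial:
  "theta_trunc (Suc n) w e 0 q x = theta_trunc n w e 0 q x + of_nat (w (Suc n)) * theta_monomial q x (Suc n) e"
  by (simp add: theta_trunc_def theta_monomial_def mult.assoc)

datatype fx_state = Fx_State fx_ivl fx_cbox fx_cbox fx_cbox fx_cbox fx_cbox fx_cbox fx_cbox fx_cbox

fun fx_encloses :: "real \<Rightarrow> complex \<Rightarrow> nat \<Rightarrow> fx_state \<Rightarrow> bool" where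
  "fx_encloses q x j (Fx_State P M0 M1 V DQ DT DQQ DQT DTT) \<longleftrightarrow>
     fx_in (q ^ j) P \<and> fx_cin (theta_monomial q x j 0) M0 \<and> fx_cin (theta_monomial q x j 1) M1 \<and>
     fx_cin (theta_trunc j (\<lambda>_. 1) 0 0 q x) V \<and>
     fx_cin (theta_trunc j (weight_dq (\<lambda>_. 1) 0) 0 0 q x) DQ \<and>
     fx_cin (theta_trunc j (weight_dx (\<lambda>_. 1) 0) 1 0 q x) DT \<and>
     fx_cin (theta_trunc j (weight_dq (weight_dq (\<lambda>_. 1) 0) 1) 0 0 q x) DQQ \<and>
     fx_cin (theta_trunc j (weight_dx (weight_dq (\<lambda>_. 1) 0) 0) 1 0 q x) DQT \<and>
     fx_cin (theta_trunc j (weight_dx (weight_dx (\<lambda>_. 1) 0) 1) 2 0 q x) DTT"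

text \<open>The weights are computed in \<open>int\<close>: \<open>code_simp\<close> evaluates \<open>nat\<close> arithmetic much
  more slowly.\<close>

fun fx_step :: "nat \<Rightarrow> fx_ivl \<Rightarrow> fx_cbox \<Rightarrow> fx_state \<Rightarrow> fx_state" where
  "fx_step j Q X (Fx_State P M0 M1 V DQ DT DQQ DQT DTT) =
    (let P' = fx_mul P Q; M1' = fx_cscale P' M0; M2' = fx_cscale P' M1; M0' = fx_cmul M1' X;
         n = int (tri j); i = int j in
     Fx_State P' M0' M1' (fx_cadd V M0')
       (fx_cadd DQ (fx_cscale_int n M0')) (fx_cadd DT (fx_cscale_int i M1'))
       (fx_cadd DQQ (fx_cscale_int (n * (n - 1)) M0')) (fx_cadd DQT (fx_cscale_int (n * i) M1'))
       (fx_cadd DTT (fx_cscale_int (i * (i - 1)) M2')))"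

definition fx_cone :: fx_cbox where
  "fx_cone = ((16384, 16384), (0, 0))"

definition fx_czero :: fx_cbox where
  "fx_czero = ((0, 0), (0, 0))"

fun fx_eval :: "nat \<Rightarrow> fx_ivl \<Rightarrow> fx_cbox \<Rightarrow> fx_state" where
  "fx_eval 0 Q X = Fx_State (16384, 16384) fx_cone fx_cone fx_cone fx_czero fx_czero fx_czero fx_czero fx_czero"
| "fx_eval (Suc j) Q X = fx_step (Suc j) Q X (fx_eval j Q X)"

lemma fx_encloses_step:
  assumes q: "fx_in q Q" and x: "fx_cin x X" and st: "fx_encloses q x j st"
  shows "fx_encloses q x (Suc j) (fx_step (Suc j) Q X st)"
proof -
  obtain P M0 M1 V DQ DT DQQ DQT DTT where st_eq: "st = Fx_State P M0 M1 V DQ DT DQQ DQT DTT"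
    by (cases st)
  note encl = st[unfolded st_eq fx_encloses.simps]
  have P': "fx_in (q ^ Suc j) (fx_mul P Q)"
    unfolding power_Suc2 using encl q by (intro fx_in_mul) simp_all
  have M1': "fx_cin (theta_monomial q x (Suc j) 1) (fx_cscale (fx_mul P Q) M0)"
    unfolding One_nat_def theta_monomial_Suc_Suc using encl P' by (intro fx_cin_scale) simp_all
  have M2': "fx_cin (theta_monomial q x (Suc j) 2) (fx_cscale (fx_mul P Q) M1)"
    unfolding numeral_2_eq_2 theta_monomial_Suc_Suc using encl P' by (intro fx_cin_scale) simp_all
  have M0': "fx_cin (theta_monomial q x (Suc j) 0) (fx_cmul (fx_cscale (fx_mul P Q) M0) X)"
    unfolding theta_monomial_Suc_0 using M1' x by (rule fx_cin_mul)
  have int_pred: "int m * (int m - 1) = int (m * (m - 1))" for m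
    by (cases m) (simp_all add: algebra_simps)
  show ?thesis
    unfolding st_eq fx_step.simps Let_def fx_encloses.simps theta_trunc_Suc_monomial
      weight_dq_def[of _ _ "Suc j"] weight_dx_def[of _ _ "Suc j"] One_nat_def[symmetric] mult_1 diff_zero
      int_pred of_nat_mult[symmetric]
    using encl P' M0' M1' M2' by (intro conjI fx_cin_add fx_cin_scale_int) simp_all
qed

lemma fx_encloses_eval:
  assumes "fx_in q Q" "fx_cin x X"
  shows "fx_encloses q x n (fx_eval n Q X)"
proof (induction n)
  case 0
  show ?case
    by (simp add: theta_trunc_def theta_monomial_def weight_dq_def weight_dx_def tri_def
        fx_cone_def fx_czero_def fx_cin_def fx_in_def fx_real_def)
next
  case (Suc n)
  then show ?case
    using fx_encloses_step[OF assms] by simp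
qed

definition fx_w :: fx_ivl where
  "fx_w = (34755, 34756)"

lemma fx_in_w: "fx_in (3 / sqrt 2) fx_w"
proof -
  have "141421 / 100000 \<le> sqrt 2" "sqrt 2 \<le> 141422 / 100000"
    by (rule real_le_rsqrt; simp add: power2_eq_square) (rule real_le_lsqrt; simp add: power2_eq_square)
  then show ?thesis
    by (simp add: fx_w_def fx_in_def fx_real_def field_simps)
qed

definition fx_theta :: "fx_ivl \<Rightarrow> fx_ivl \<Rightarrow> fx_state" where
  "fx_theta Q T = fx_eval 9 Q (fx_neg T, fx_w)"

lemma fx_encloses_theta:
  assumes "fx_in q Q" "fx_in t T"
  shows "fx_encloses q (Complex (- t) (3 / sqrt 2)) 9 (fx_theta Q T)"
  unfolding fx_theta_def
  using assms fx_in_w by (intro fx_encloses_eval) (simp_all add: fx_cin_def fx_in_neg)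

definition fx_part :: "bool \<Rightarrow> fx_cbox \<Rightarrow> fx_ivl" where
  "fx_part b Z = (if b then fst Z else snd Z)"

definition fx_mag :: "fx_ivl \<Rightarrow> int" where
  "fx_mag X = max \<bar>fst X\<bar> \<bar>snd X\<bar>"

lemma fx_in_part: "fx_cin z Z \<Longrightarrow> fx_in (cpart b z) (fx_part b Z)"
  by (simp add: fx_cin_def fx_part_def cpart_def)

lemma abs_le_fx_mag: "fx_in x X \<Longrightarrow> \<bar>x\<bar> \<le> fx_real (fx_mag X)"
  by (auto simp: fx_in_def fx_mag_def fx_real_def abs_le_iff divide_le_cancel le_max_iff_disj)

lemma abs_cpart_le_fx_mag_div:
  assumes "fx_cin (of_real (q ^ d) * z) Z" "fx_real q0 \<le> q" "0 < q0"
  shows "\<bar>cpart b z\<bar> \<le> fx_real (fx_mag (fx_part b Z)) / fx_real q0 ^ d"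
proof -
  have q0: "0 < fx_real q0"
    using assms(3) by (simp add: fx_real_def)
  have "fx_real q0 ^ d * \<bar>cpart b z\<bar> \<le> q ^ d * \<bar>cpart b z\<bar>"
    using q0 assms(2) by (intro mult_right_mono power_mono) auto
  also have "\<dots> = \<bar>cpart b (of_real (q ^ d) * z)\<bar>"
    using q0 assms(2) by (simp add: abs_mult del: of_real_power)
  also have "\<dots> \<le> fx_real (fx_mag (fx_part b Z))"
    using assms(1) by (intro abs_le_fx_mag fx_in_part)
  finally show ?thesis
    using q0 by (simp add: field_simps)
qed

lemma abs_diff_le_fx_radius:
  assumes "fx_in x (a, b)"
  shows "\<bar>x - fx_real c\<bar> \<le> fx_real (max (c - a) (b - c))"
  using assms by (auto simp: fx_in_def fx_real_def abs_le_iff field_simps)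

section \<open>The box certificate\<close>

definition taylor_numer :: "int \<Rightarrow> int \<Rightarrow> int \<Rightarrow> int \<Rightarrow> int \<Rightarrow> int \<Rightarrow> int \<Rightarrow> int \<Rightarrow> int \<Rightarrow> int" where
  "taylor_numer q0 a g h k m l r s =
     2 * q0 * q0 * 16384 * 16384 * a - 2 * q0 * 16384 * 16384 * g * r - 2 * q0 * q0 * 16384 * h * s
     - 2 * q0 * 16384 * m * r * s - 16384 * 16384 * k * r * r - q0 * q0 * l * s * s"

lemma taylor_numer_pos:
  assumes "0 < q0" "2 * q0 * q0 * 16384 * 16384 * 16384 < 100 * taylor_numer q0 a g h k m l r s"
  shows "1 / 100 < fx_real a - fx_real g / fx_real q0 * fx_real r - fx_real h * fx_real s
    - fx_real m / fx_real q0 * fx_real r * fx_real s - fx_real k / fx_real q0 ^ 2 / 2 * (fx_real r)\<^sup>2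
    - fx_real l / 2 * (fx_real s)\<^sup>2"
proof -
  have q0: "0 < real_of_int q0"
    using assms(1) by simp
  have "fx_real a - fx_real g / fx_real q0 * fx_real r - fx_real h * fx_real s
      - fx_real m / fx_real q0 * fx_real r * fx_real s - fx_real k / fx_real q0 ^ 2 / 2 * (fx_real r)\<^sup>2
      - fx_real l / 2 * (fx_real s)\<^sup>2
      = real_of_int (taylor_numer q0 a g h k m l r s) / (2 * of_int q0 ^ 2 * 16384 ^ 3)"
    using q0 unfolding taylor_numer_def fx_real_def by (simp add: field_simps power2_eq_square)
  moreover have "real_of_int (2 * q0 * q0 * 16384 * 16384 * 16384) < of_int (100 * taylor_numer q0 a g h k m l r s)"
    using assms(2) by (simp only: of_int_less_iff)
  then have "1 / 100 < real_of_int (taylor_numer q0 a g h k m l r s) / (2 * of_int q0 ^ 2 * 16384 ^ 3)"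
    using q0 by (simp add: field_simps power2_eq_square)
  ultimately show ?thesis
    by simp
qed

text \<open>The test is the inequality of \<open>taylor_numer_pos\<close> multiplied by \<open>2 q0^2 16384^3\<close>, so that
  \<open>code_simp\<close> only has to evaluate integer arithmetic.\<close>

fun leaf_ok :: "bool \<Rightarrow> fx_ivl \<Rightarrow> fx_ivl \<Rightarrow> bool" where
  "leaf_ok b (q0, q1) (t0, t1) =
    (let qc = (q0 + q1) div 2; tc = (t0 + t1) div 2 in
     case fx_theta (qc, qc) (tc, tc) of Fx_State _ _ _ V DQ DT _ _ _ \<Rightarrow>
     case fx_theta (q0, q1) (t0, t1) of Fx_State _ _ _ _ _ _ DQQ DQT DTT \<Rightarrow>
     0 < q0 \<and> 2 * q0 * q0 * 16384 * 16384 * 16384 < 100 * taylor_numer q0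
       (fst (fx_part b V)) (fx_mag (fx_part b DQ)) (fx_mag (fx_part b DT))
       (fx_mag (fx_part b DQQ)) (fx_mag (fx_part b DQT)) (fx_mag (fx_part b DTT))
       (max (qc - q0) (q1 - qc)) (max (tc - t0) (t1 - tc)))"

lemma fx_theta_bounds:
  assumes st: "fx_theta Q T = Fx_State P M0 M1 V DQ DT DQQ DQT DTT"
    and q: "fx_in q Q" and t: "fx_in t T" and q0: "0 < q0" "fx_real q0 \<le> q"
  shows "fx_real (fst (fx_part b V)) \<le> theta_part b (\<lambda>_. 1) 0 0 q t"
    and "\<bar>theta_part b (weight_dq (\<lambda>_. 1) 0) 0 1 q t\<bar> \<le> fx_real (fx_mag (fx_part b DQ)) / fx_real q0"
    and "\<bar>theta_part b (weight_dx (\<lambda>_. 1) 0) 1 0 q t\<bar> \<le> fx_real (fx_mag (fx_part b DT))"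
    and "\<bar>theta_part b (weight_dq (weight_dq (\<lambda>_. 1) 0) 1) 0 2 q t\<bar>
      \<le> fx_real (fx_mag (fx_part b DQQ)) / fx_real q0 ^ 2"
    and "\<bar>theta_part b (weight_dx (weight_dq (\<lambda>_. 1) 0) 0) 1 1 q t\<bar>
      \<le> fx_real (fx_mag (fx_part b DQT)) / fx_real q0"
    and "\<bar>theta_part b (weight_dx (weight_dx (\<lambda>_. 1) 0) 1) 2 0 q t\<bar> \<le> fx_real (fx_mag (fx_part b DTT))"
proof -
  define x where "x = Complex (- t) (3 / sqrt 2)"
  have encl: "fx_encloses q x 9 (Fx_State P M0 M1 V DQ DT DQQ DQT DTT)"
    unfolding x_def st[symmetric] using q t by (rule fx_encloses_theta)
  then show "fx_real (fst (fx_part b V)) \<le> theta_part b (\<lambda>_. 1) 0 0 q t"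
    using fx_in_part[of _ V b] by (simp add: theta_part_def x_def fx_in_def)
  show "\<bar>theta_part b (weight_dq (\<lambda>_. 1) 0) 0 1 q t\<bar> \<le> fx_real (fx_mag (fx_part b DQ)) / fx_real q0"
    using abs_cpart_le_fx_mag_div[of q 1 _ DQ q0 b] encl q0
      theta_trunc_shift[of 1 "weight_dq (\<lambda>_. 1) 0"]
    by (simp add: theta_part_def x_def weight_dq_def)
  show "\<bar>theta_part b (weight_dx (\<lambda>_. 1) 0) 1 0 q t\<bar> \<le> fx_real (fx_mag (fx_part b DT))"
    using abs_cpart_le_fx_mag_div[of q 0 _ DT q0 b] encl q0 by (simp add: theta_part_def x_def)
  show "\<bar>theta_part b (weight_dq (weight_dq (\<lambda>_. 1) 0) 1) 0 2 q t\<bar>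
      \<le> fx_real (fx_mag (fx_part b DQQ)) / fx_real q0 ^ 2"
    using abs_cpart_le_fx_mag_div[of q 2 _ DQQ q0 b] encl q0
      theta_trunc_shift[of 2 "weight_dq (weight_dq (\<lambda>_. 1) 0) 1"]
    by (simp add: theta_part_def x_def weight_dq_def)
  show "\<bar>theta_part b (weight_dx (weight_dq (\<lambda>_. 1) 0) 0) 1 1 q t\<bar>
      \<le> fx_real (fx_mag (fx_part b DQT)) / fx_real q0"
    using abs_cpart_le_fx_mag_div[of q 1 _ DQT q0 b] encl q0
      theta_trunc_shift[of 1 "weight_dx (weight_dq (\<lambda>_. 1) 0) 0"]
    by (simp add: theta_part_def x_def weight_dq_def weight_dx_def)
  show "\<bar>theta_part b (weight_dx (weight_dx (\<lambda>_. 1) 0) 1) 2 0 q t\<bar> \<le> fx_real (fx_mag (fx_part b DTT))"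
    using abs_cpart_le_fx_mag_div[of q 0 _ DTT q0 b] encl q0 by (simp add: theta_part_def x_def)
qed

lemma fx_theta_taylor_lower_bound:
  fixes b :: bool
  assumes centre: "fx_theta (qc, qc) (tc, tc) = Fx_State P M0 M1 V DQ DT D1 D2 D3"
    and box: "fx_theta (q0, q1) (t0, t1) = Fx_State P' N0 N1 E1 E2 E3 DQQ DQT DTT"
    and q: "fx_in q (q0, q1)" and t: "fx_in t (t0, t1)"
    and q0: "0 < q0" and "q0 \<le> qc" "qc \<le> q1" "t0 \<le> tc" "tc \<le> t1"
  defines "G \<equiv> fx_real (fx_mag (fx_part b DQ)) / fx_real q0" and "H \<equiv> fx_real (fx_mag (fx_part b DT))"
    and "Mqq \<equiv> fx_real (fx_mag (fx_part b DQQ)) / fx_real q0 ^ 2"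
    and "Mqt \<equiv> fx_real (fx_mag (fx_part b DQT)) / fx_real q0"
    and "Mtt \<equiv> fx_real (fx_mag (fx_part b DTT))"
    and "R \<equiv> fx_real (max (qc - q0) (q1 - qc))" and "S \<equiv> fx_real (max (tc - t0) (t1 - tc))"
  shows "fx_real (fst (fx_part b V)) - G * R - H * S - Mqt * R * S - Mqq / 2 * R\<^sup>2 - Mtt / 2 * S\<^sup>2
    \<le> theta_part b (\<lambda>_. 1) 0 0 q t"
proof -
  have qc_box: "fx_in (fx_real qc) (q0, q1)" and tc_box: "fx_in (fx_real tc) (t0, t1)"
    and qc_lower: "fx_real q0 \<le> fx_real qc"
    using assms(6-9) by (simp_all add: fx_in_def fx_real_def divide_right_mono)
  note at_centre = fx_theta_bounds[OF centre fx_in_point fx_in_point q0 qc_lower, of b]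
  note on_box = fx_theta_bounds[OF box _ _ q0, of _ _ b]
  have in_box: "x \<in> {fx_real a..fx_real a'} \<longleftrightarrow> fx_in x (a, a')" for x a a'
    by (simp add: fx_in_def)
  have "theta_part b (\<lambda>_. 1) 0 0 (fx_real qc) (fx_real tc) - G * R - H * S - Mqt * R * S
      - Mqq / 2 * R\<^sup>2 - Mtt / 2 * S\<^sup>2 \<le> theta_part b (\<lambda>_. 1) 0 0 q t"
  proof (rule theta_part_taylor_lower_bound)
    show "q \<in> {fx_real q0..fx_real q1}" "fx_real qc \<in> {fx_real q0..fx_real q1}"
      "t \<in> {fx_real t0..fx_real t1}" "fx_real tc \<in> {fx_real t0..fx_real t1}"
      using q t qc_box tc_box by (simp_all only: in_box)
    fix x y
    assume "x \<in> {fx_real q0..fx_real q1}" "y \<in> {fx_real t0..fx_real t1}"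
    then have xy: "fx_in x (q0, q1)" "fx_in y (t0, t1)" "fx_real q0 \<le> x"
      by (simp_all add: fx_in_def)
    show "\<bar>theta_part b (weight_dq (weight_dq (\<lambda>_. 1) 0) 1) 0 2 x y\<bar> \<le> Mqq"
      unfolding Mqq_def by (rule on_box(4)[OF xy])
    show "\<bar>theta_part b (weight_dx (weight_dq (\<lambda>_. 1) 0) 0) 1 1 x y\<bar> \<le> Mqt"
      unfolding Mqt_def by (rule on_box(5)[OF xy])
    show "\<bar>theta_part b (weight_dx (weight_dx (\<lambda>_. 1) 0) 1) 2 0 x y\<bar> \<le> Mtt"
      unfolding Mtt_def by (rule on_box(6)[OF xy])
  qed (use at_centre(2,3) abs_diff_le_fx_radius[OF q] abs_diff_le_fx_radius[OF t]
      in \<open>simp_all only: G_def H_def R_def S_def\<close>)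
  then show ?thesis
    using at_centre(1) by linarith
qed

lemma leaf_ok_sound:
  assumes leaf: "leaf_ok b (q0, q1) (t0, t1)" and q: "fx_in q (q0, q1)" and t: "fx_in t (t0, t1)"
  shows "1 / 100 < theta_part b (\<lambda>_. 1) 0 0 q t"
proof -
  define qc tc where "qc = (q0 + q1) div 2" and "tc = (t0 + t1) div 2"
  obtain P M0 M1 V DQ DT D1 D2 D3 where centre: "fx_theta (qc, qc) (tc, tc) = Fx_State P M0 M1 V DQ DT D1 D2 D3"
    by (cases "fx_theta (qc, qc) (tc, tc)")
  obtain P' N0 N1 E1 E2 E3 DQQ DQT DTT where box: "fx_theta (q0, q1) (t0, t1) = Fx_State P' N0 N1 E1 E2 E3 DQQ DQT DTT"
    by (cases "fx_theta (q0, q1) (t0, t1)")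
  have q0: "0 < q0" and numer: "2 * q0 * q0 * 16384 * 16384 * 16384 < 100 * taylor_numer q0
      (fst (fx_part b V)) (fx_mag (fx_part b DQ)) (fx_mag (fx_part b DT))
      (fx_mag (fx_part b DQQ)) (fx_mag (fx_part b DQT)) (fx_mag (fx_part b DTT))
      (max (qc - q0) (q1 - qc)) (max (tc - t0) (t1 - tc))"
    using leaf unfolding leaf_ok.simps Let_def qc_def[symmetric] tc_def[symmetric] centre box fx_state.case
    by auto
  have "q0 \<le> q1" "t0 \<le> t1"
    using q t by (simp_all add: fx_in_def fx_real_def)
  then have "q0 \<le> qc" "qc \<le> q1" "t0 \<le> tc" "tc \<le> t1"
    unfolding qc_def tc_def by linarith+
  then show ?thesis
    using fx_theta_taylor_lower_bound[OF centre box q t q0, of b] taylor_numer_pos[OF q0 numer] by linarith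
qed

datatype cert = Leaf bool | Split_q cert cert | Split_t cert cert

fun cert_ok :: "cert \<Rightarrow> fx_ivl \<Rightarrow> fx_ivl \<Rightarrow> bool" where
  "cert_ok (Leaf b) Q T = leaf_ok b Q T"
| "cert_ok (Split_q c c') (q0, q1) T =
    (let qm = (q0 + q1) div 2 in cert_ok c (q0, qm) T \<and> cert_ok c' (qm, q1) T)"
| "cert_ok (Split_t c c') Q (t0, t1) =
    (let tm = (t0 + t1) div 2 in cert_ok c Q (t0, tm) \<and> cert_ok c' Q (tm, t1))"

lemma fx_in_split: "fx_in x (a, b) \<Longrightarrow> fx_in x (a, m) \<or> fx_in x (m, b)"
  by (auto simp: fx_in_def)

lemma cert_ok_sound:
  "cert_ok c Q T \<Longrightarrow> fx_in q Q \<Longrightarrow> fx_in t T \<Longrightarrow> \<exists>b. 1 / 100 < theta_part b (\<lambda>_. 1) 0 0 q t"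
proof (induction c Q T rule: cert_ok.induct)
  case (1 b Q T)
  obtain q0 q1 t0 t1 where "Q = (q0, q1)" "T = (t0, t1)"
    by fastforce
  then show ?case
    using 1 leaf_ok_sound[of b q0 q1 t0 t1 q t] by (auto simp del: leaf_ok.simps)
next
  case (2 c c' q0 q1 T)
  then show ?case
    using fx_in_split[of q q0 q1 "(q0 + q1) div 2"] by (auto simp: Let_def)
next
  case (3 c c' Q t0 t1)
  then show ?case
    using fx_in_split[of t t0 t1 "(t0 + t1) div 2"] by (auto simp: Let_def)
qed

definition the_cert :: cert where
  "the_cert =
    Split_q
      (Split_q
        (Split_t (Leaf False) (Split_q (Leaf True) (Leaf True)))
        (Split_t (Split_q (Leaf True) (Leaf True)) (Split_q (Leaf True) (Leaf True))))
      (Split_q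
        (Split_t
          (Split_q (Leaf True) (Split_t (Leaf True) (Leaf True)))
          (Split_q (Split_t (Leaf True) (Leaf True)) (Split_t (Leaf True) (Leaf True))))
        (Split_t
          (Split_q
            (Split_t (Leaf True) (Leaf True))
            (Split_t (Leaf True) (Split_q (Leaf True) (Leaf True))))
          (Split_q
            (Split_t (Leaf True) (Split_q (Leaf True) (Leaf True)))
            (Split_t (Split_q (Leaf True) (Leaf True)) (Split_q (Leaf True) (Leaf True))))))"

lemma cert_ok_the_cert: "cert_ok the_cert (9830, 12288) (16384, 34756)"
  unfolding the_cert_def by code_simp

section \<open>The tail of the series\<close>

lemma tri_ge_linear: "55 + 11 * j \<le> tri (j + 10)"
proof -
  have "2 * (55 + 11 * j) \<le> (j + 10) * (j + 10 + 1)"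
    by (simp add: algebra_simps)
  then have "2 * (55 + 11 * j) div 2 \<le> (j + 10) * (j + 10 + 1) div 2"
    by (rule div_le_mono)
  then show ?thesis
    unfolding tri_def by simp
qed

lemma ptheta_tail_bound:
  fixes q :: real and x :: complex
  assumes q: "0 \<le> q" "q \<le> 3 / 4" and x: "cmod x \<le> 3"
  shows "cmod (ptheta q x - theta_trunc 9 (\<lambda>_. 1) 0 0 q x) \<le> 91 / 10000"
proof -
  define f where "f j = complex_of_real (q ^ tri j) * x ^ j" for j
  define C r :: real where "C = (3 / 4) ^ 55 * 3 ^ 10" and "r = (3 / 4) ^ 11 * 3"
  have r: "0 \<le> r" "r < 1"
    unfolding r_def by (simp_all add: power_divide)
  have tail_le: "norm (f (j + 10)) \<le> C * r ^ j" for j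
  proof -
    have "norm (f (j + 10)) = q ^ tri (j + 10) * cmod x ^ (j + 10)"
      using q by (simp add: f_def norm_mult norm_power)
    also have "\<dots> \<le> (3 / 4) ^ tri (j + 10) * 3 ^ (j + 10)"
      using q x by (intro mult_mono power_mono) auto
    also have "\<dots> \<le> (3 / 4) ^ (55 + 11 * j) * 3 ^ (j + 10)"
      using tri_ge_linear by (intro mult_right_mono power_decreasing) auto
    also have "\<dots> = C * r ^ j"
      unfolding C_def r_def by (simp add: power_add power_mult_distrib mult_ac flip: power_mult)
    finally show ?thesis .
  qed
  have geometric: "summable (\<lambda>j. C * r ^ j)"
    using r by (intro summable_mult summable_geometric) simp
  have "summable (\<lambda>j. f (j + 10))"
    by (rule summable_comparison_test'[OF geometric tail_le])
  then have "ptheta q x = (\<Sum>j. f (j + 10)) + (\<Sum>j<10. f j)"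
    unfolding ptheta_def tri_def[symmetric] f_def[symmetric] by (intro suminf_split_initial_segment) simp
  moreover have "(\<Sum>j<10. f j) = theta_trunc 9 (\<lambda>_. 1) 0 0 q x"
    unfolding f_def theta_trunc_def by (intro sum.cong) auto
  ultimately have "ptheta q x - theta_trunc 9 (\<lambda>_. 1) 0 0 q x = (\<Sum>j. f (j + 10))"
    by simp
  also have "cmod \<dots> \<le> (\<Sum>j. C * r ^ j)"
    by (rule norm_suminf_le[OF tail_le geometric])
  also have "\<dots> = C / (1 - r)"
    using r by (simp add: suminf_mult suminf_geometric)
  also have "\<dots> \<le> 91 / 10000"
    unfolding C_def r_def by (simp add: field_simps)
  finally show ?thesis .
qed

theorem lemma9:
  fixes q t :: real
  assumes "0.6 \<le> q" "q \<le> 0.75" "1 \<le> t" "t \<le> 3 / sqrt 2"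
  shows "ptheta q (Complex (- t) (3 / sqrt 2)) \<noteq> 0"
proof
  define x where "x = Complex (- t) (3 / sqrt 2)"
  assume "ptheta q (Complex (- t) (3 / sqrt 2)) = 0"
  then have zero: "ptheta q x = 0"
    by (simp add: x_def)
  have "fx_in q (9830, 12288)" "fx_in t (16384, 34756)"
    using assms fx_in_w by (simp_all add: fx_in_def fx_real_def fx_w_def)
  then obtain b where b: "1 / 100 < cpart b (theta_trunc 9 (\<lambda>_. 1) 0 0 q x)"
    using cert_ok_sound[OF cert_ok_the_cert] by (auto simp: theta_part_def x_def)
  have "t\<^sup>2 \<le> (3 / sqrt 2)\<^sup>2"
    using assms(3,4) by (intro power_mono) auto
  then have "cmod x \<le> 3"
    unfolding x_def complex_norm by (intro real_le_lsqrt) (auto simp: power_divide)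
  then have "cmod (ptheta q x - theta_trunc 9 (\<lambda>_. 1) 0 0 q x) \<le> 91 / 10000"
    using assms(1,2) by (intro ptheta_tail_bound) auto
  then show False
    using b zero abs_cpart_le[of b "ptheta q x - theta_trunc 9 (\<lambda>_. 1) 0 0 q x"]
    by (simp add: cpart_diff)
qed

end
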